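(* Let $(X,\mathscr{R})$ be a closed mixed reaction network with $\mathscr{R}=\mathscr{R}_{\mathrm{rev}}\sqcup\mathscr{R}_{\mathrm{irr}}$ that is thermodynamically sound. Then its reversible completion $(X,\mathscr{R}^* )$ is thermodynamically sound. Moreover, reaction energies $g^*\in\mathbb{R}^{\mathscr{R}^*}$ can be chosen such that both: - $(X,\mathscr{R}^*,g^* )$ is thermodynamic; - $g^*_r<0<g^*_{\bar r}$ for all $r\in\mathscr{R}_{\mathrm{irr}}$.
   Context: A reaction network (RN) $(X,\mathscr{R})$ consists of a finite non-empty set $X$ of species and a finite non-empty set $\mathscr{R}$ of reactions. Each reaction $r$ is given by stoichiometric coefficients $s^-_{xr},s^+_{xr}\in\mathbb{N}_0$. The stoichiometric matrix $S\in\mathbb{Z}^{X\times\mathscr{R}}$ has entries $S_{xr}=s^+_{xr}-s^-_{xr}$. The RN is closed if every reaction $r$ has $x,y$ with $S_{xr}<0<S_{yr}$. The reverse $\bar r$ of $r$ has $s^-_{x\bar r}=s^+_{xr}$ and $s^+_{x\bar r}=s^-_{xr}$. A mixed RN has $\mathscr{R}=\mathscr{R}_{\mathrm{rev}}\sqcup\mathscr{R}_{\mathrm{irr}}$, where $r\in\mathscr{R}_{\mathrm{rev}}$ implies $\bar r\in\mathscr{R}_{\mathrm{rev}}$, and $r\in\mathscr{R}_{\mathrm{irr}}$ implies $\bar r\notin\mathscr{R}$. For an RN with stoichiometric matrix $S$ and $g\in\mathbb{R}^{\mathscr{R}}$, $(X,\mathscr{R},g)$ is thermodynamic if $g\in(\ker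 S)^\perp$. The mixed RN is thermodynamically sound if there is $g$ with $(X,\mathscr{R},g)$ thermodynamic and $g_r<0$ for all $r\in\mathscr{R}_{\mathrm{irr}}$. The reversible completion is $(X,\mathscr{R}^* )$ with $\mathscr{R}^*=\mathscr{R}_{\mathrm{rev}}\sqcup\mathscr{R}_{\mathrm{irr}}\sqcup\{\bar r: r\in\mathscr{R}_{\mathrm{irr}}\}$. As a reversible RN, it is thermodynamically sound if there is $g^*$ with $(X,\mathscr{R}^*,g^* )$ thermodynamic. *)

theory Defs
  imports Complex_Main
begin

text \<open>A reaction is given by its stoichiometric coefficients: the pair
  (reactant coefficients s^-, product coefficients s^+), each a function
  species => nat.  Reactions are identified with their coefficient data.\<close>

type_synonym 'x rn_complex = "'x \<Rightarrow> nat"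
type_synonym 'x reaction = "'x rn_complex \<times> 'x rn_complex"

definition stoich :: "'x reaction \<Rightarrow> 'x \<Rightarrow> int" where
  "stoich r x = int (snd r x) - int (fst r x)"

definition rev_reaction :: "'x reaction \<Rightarrow> 'x reaction" where
  "rev_reaction r = (snd r, fst r)"

definition reaction_network :: "'x set \<Rightarrow> 'x reaction set \<Rightarrow> bool" where
  "reaction_network X R \<longleftrightarrow> finite X \<and> X \<noteq> {} \<and> finite R \<and> R \<noteq> {} \<and>
     (\<forall>r\<in>R. \<forall>x. x \<notin> X \<longrightarrow> fst r x = 0 \<and> snd r x = 0)"

definition closed_RN :: "'x set \<Rightarrow> 'x reaction set \<Rightarrow> bool" where
  "closed_RN X R \<longleftrightarrow> (\<forall>r\<in>R. \<exists>x\<in>X. \<exists>y\<in>X. stoich r x < 0 \<and> 0 < stoich r y)"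

definition stoich_kernel :: "'x set \<Rightarrow> 'x reaction set \<Rightarrow> ('x reaction \<Rightarrow> real) set" where
  "stoich_kernel X R = {v. (\<forall>r. r \<notin> R \<longrightarrow> v r = 0) \<and>
      (\<forall>x\<in>X. (\<Sum>r\<in>R. of_int (stoich r x) * v r) = 0)}"

definition thermodynamic :: "'x set \<Rightarrow> 'x reaction set \<Rightarrow> ('x reaction \<Rightarrow> real) \<Rightarrow> bool" where
  "thermodynamic X R g \<longleftrightarrow> (\<forall>v\<in>stoich_kernel X R. (\<Sum>r\<in>R. g r * v r) = 0)"

definition mixed_RN :: "'x set \<Rightarrow> 'x reaction set \<Rightarrow> 'x reaction set \<Rightarrow> 'x reaction set \<Rightarrow> bool" where
  "mixed_RN X R Rrev Rirr \<longleftrightarrow> reaction_network X R \<and> R = Rrev \<union> Rirr \<and> Rrev \<inter> Rirr = {} \<and>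
     (\<forall>r\<in>Rrev. rev_reaction r \<in> Rrev) \<and> (\<forall>r\<in>Rirr. rev_reaction r \<notin> R)"

definition thermo_sound_mixed :: "'x set \<Rightarrow> 'x reaction set \<Rightarrow> 'x reaction set \<Rightarrow> bool" where
  "thermo_sound_mixed X R Rirr \<longleftrightarrow> (\<exists>g. thermodynamic X R g \<and> (\<forall>r\<in>Rirr. g r < 0))"

definition rev_completion :: "'x reaction set \<Rightarrow> 'x reaction set \<Rightarrow> 'x reaction set" where
  "rev_completion Rrev Rirr = Rrev \<union> Rirr \<union> rev_reaction ` Rirr"

end

theory Submission
  imports Defs
begin

text \<open>Extend the energies antisymmetrically to the reversed irreversible reactions.  A flux v
  on the completion folds to a flux on the original network by replacing each irreversible r
  and its reverse by the net flux v r - v (reverse of r).  Since both the stoichiometry and the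
  extended energies change sign under reversal, folding maps the stoichiometric kernel of the
  completion into that of the original network and preserves the pairing with the energies.\<close>

lemma rev_reaction_rev_reaction [simp]: "rev_reaction (rev_reaction r) = r"
  by (simp add: rev_reaction_def)

lemma inj_rev_reaction: "inj rev_reaction"
  by (metis injI rev_reaction_rev_reaction)

lemma stoich_rev_reaction: "stoich (rev_reaction r) x = - stoich r x"
  by (simp add: stoich_def rev_reaction_def)

definition fold_reversed :: "'x reaction set \<Rightarrow> 'x reaction set \<Rightarrow>
    ('x reaction \<Rightarrow> real) \<Rightarrow> 'x reaction \<Rightarrow> real" where
  "fold_reversed R I v r =
     (if r \<in> I then v r - v (rev_reaction r) else if r \<in> R then v r else 0)"

definition extend_reversed :: "'x reaction set \<Rightarrow> ('x reaction \<Rightarrow> real) \<Rightarrow> 'x reaction \<Rightarrow> real" where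
  "extend_reversed I g r = (if r \<in> rev_reaction ` I then - g (rev_reaction r) else g r)"

lemma sum_fold_reversed:
  fixes a v :: "'x reaction \<Rightarrow> real"
  assumes "finite R" "I \<subseteq> R" "R \<inter> rev_reaction ` I = {}"
    and antisym: "\<And>r. r \<in> I \<Longrightarrow> a (rev_reaction r) = - a r"
  shows "(\<Sum>r\<in>R \<union> rev_reaction ` I. a r * v r) = (\<Sum>r\<in>R. a r * fold_reversed R I v r)"
proof -
  have "finite I" using assms(1,2) by (rule finite_subset[rotated])
  have "(\<Sum>r\<in>R \<union> rev_reaction ` I. a r * v r)
      = (\<Sum>r\<in>R. a r * v r) + (\<Sum>r\<in>rev_reaction ` I. a r * v r)"
    using assms(1,3) \<open>finite I\<close> by (simp add: sum.union_disjoint)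
  also have "(\<Sum>r\<in>rev_reaction ` I. a r * v r) = (\<Sum>r\<in>I. a (rev_reaction r) * v (rev_reaction r))"
    by (simp add: sum.reindex[OF inj_on_subset[OF inj_rev_reaction subset_UNIV]] comp_def)
  also have "\<dots> = - (\<Sum>r\<in>I. a r * v (rev_reaction r))"
    using antisym by (simp add: sum_negf)
  also have "(\<Sum>r\<in>I. a r * v (rev_reaction r))
      = (\<Sum>r\<in>R. if r \<in> I then a r * v (rev_reaction r) else 0)"
    using assms(1,2) by (simp add: sum.If_cases Int_absorb1)
  also have "(\<Sum>r\<in>R. a r * v r) + - \<dots> = (\<Sum>r\<in>R. a r * fold_reversed R I v r)"
    by (auto simp: fold_reversed_def sum_subtractf[symmetric] algebra_simps intro!: sum.cong)
  finally show ?thesis .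
qed

lemma fold_reversed_in_stoich_kernel:
  assumes "finite R" "I \<subseteq> R" "R \<inter> rev_reaction ` I = {}"
    and "v \<in> stoich_kernel X (R \<union> rev_reaction ` I)"
  shows "fold_reversed R I v \<in> stoich_kernel X R"
  unfolding stoich_kernel_def
proof (intro CollectI conjI allI impI ballI)
  fix r assume "r \<notin> R"
  then show "fold_reversed R I v r = 0"
    using assms(2) by (auto simp: fold_reversed_def)
next
  fix x assume "x \<in> X"
  have "(\<Sum>r\<in>R. of_int (stoich r x) * fold_reversed R I v r)
      = (\<Sum>r\<in>R \<union> rev_reaction ` I. of_int (stoich r x) * v r)"
    using assms(1-3) by (rule sum_fold_reversed[symmetric]) (simp add: stoich_rev_reaction)
  also have "\<dots> = 0"
    using assms(4) \<open>x \<in> X\<close> by (simp add: stoich_kernel_def)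
  finally show "(\<Sum>r\<in>R. of_int (stoich r x) * fold_reversed R I v r) = 0" .
qed

lemma thermodynamic_extend_reversed:
  assumes "finite R" "I \<subseteq> R" "R \<inter> rev_reaction ` I = {}"
    and "thermodynamic X R g"
  shows "thermodynamic X (R \<union> rev_reaction ` I) (extend_reversed I g)"
  unfolding thermodynamic_def
proof
  fix v assume v: "v \<in> stoich_kernel X (R \<union> rev_reaction ` I)"
  have on_R: "extend_reversed I g r = g r" if "r \<in> R" for r
    using that assms(3) by (auto simp: extend_reversed_def)
  have antisym: "extend_reversed I g (rev_reaction r) = - extend_reversed I g r" if "r \<in> I" for r
    using that on_R[of r] assms(2) by (auto simp: extend_reversed_def)
  have "(\<Sum>r\<in>R \<union> rev_reaction ` I. extend_reversed I g r * v r)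
      = (\<Sum>r\<in>R. extend_reversed I g r * fold_reversed R I v r)"
    using assms(1-3) antisym by (rule sum_fold_reversed)
  also have "\<dots> = (\<Sum>r\<in>R. g r * fold_reversed R I v r)"
    using on_R by simp
  also have "\<dots> = 0"
    using assms(4) fold_reversed_in_stoich_kernel[OF assms(1-3) v]
    by (simp add: thermodynamic_def)
  finally show "(\<Sum>r\<in>R \<union> rev_reaction ` I. extend_reversed I g r * v r) = 0" .
qed

lemma rev_completion_eq:
  "mixed_RN X R Rrev Rirr \<Longrightarrow> rev_completion Rrev Rirr = R \<union> rev_reaction ` Rirr"
  by (simp add: mixed_RN_def rev_completion_def)

lemma mixed_RN_rev_completion:
  assumes "mixed_RN X R Rrev Rirr"
  shows "mixed_RN X (rev_completion Rrev Rirr) (rev_completion Rrev Rirr) {}"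
proof -
  have closed_rev: "rev_reaction r \<in> rev_completion Rrev Rirr"
    if "r \<in> rev_completion Rrev Rirr" for r
    using that assms by (auto simp: mixed_RN_def rev_completion_def)
  have support: "fst r x = 0 \<and> snd r x = 0"
    if "r \<in> rev_completion Rrev Rirr" "x \<notin> X" for r x
  proof -
    have "fst s x = 0 \<and> snd s x = 0" if "s \<in> R" for s
      using that \<open>x \<notin> X\<close> assms by (simp add: mixed_RN_def reaction_network_def)
    moreover have "r \<in> R \<or> rev_reaction r \<in> R"
      using \<open>r \<in> rev_completion Rrev Rirr\<close> assms by (auto simp: rev_completion_eq mixed_RN_def)
    moreover have "fst (rev_reaction r) = snd r" "snd (rev_reaction r) = fst r"
      by (simp_all add: rev_reaction_def)
    ultimately show ?thesis
      by metis
  qed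
  have "finite (rev_completion Rrev Rirr)" "rev_completion Rrev Rirr \<noteq> {}"
    using assms by (auto simp: mixed_RN_def reaction_network_def rev_completion_def)
  with closed_rev support show ?thesis
    using assms by (simp add: mixed_RN_def reaction_network_def)
qed

theorem proposition5:
  fixes X :: "'x set" and R Rrev Rirr :: "'x reaction set"
  assumes "mixed_RN X R Rrev Rirr"
    and "closed_RN X R"
    and "thermo_sound_mixed X R Rirr"
  shows "mixed_RN X (rev_completion Rrev Rirr) (rev_completion Rrev Rirr) {}
       \<and> thermo_sound_mixed X (rev_completion Rrev Rirr) {}
       \<and> (\<exists>g. thermodynamic X (rev_completion Rrev Rirr) g \<and>
              (\<forall>r\<in>Rirr. g r < 0 \<and> 0 < g (rev_reaction r)))"
proof -
  obtain g where g: "thermodynamic X R g" and g_neg: "\<forall>r\<in>Rirr. g r < 0"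
    using assms(3) by (auto simp: thermo_sound_mixed_def)
  have R: "finite R" "Rirr \<subseteq> R" "R \<inter> rev_reaction ` Rirr = {}"
    using assms(1) by (auto simp: mixed_RN_def reaction_network_def)
  have "thermodynamic X (rev_completion Rrev Rirr) (extend_reversed Rirr g)"
    using thermodynamic_extend_reversed[OF R g] rev_completion_eq[OF assms(1)] by simp
  moreover have "extend_reversed Rirr g r < 0 \<and> 0 < extend_reversed Rirr g (rev_reaction r)"
    if "r \<in> Rirr" for r
    using that R(2,3) g_neg by (auto simp: extend_reversed_def)
  ultimately show ?thesis
    using mixed_RN_rev_completion[OF assms(1)] by (auto simp: thermo_sound_mixed_def)
qed

end
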